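(* Let $S=\{a_0,a_1,a_2,\ldots\}$ and $T=\{b_0,b_1,b_2,\ldots\}$ be sets of positive integers listed in strictly increasing order ($a_i<a_{i+1}$, $b_i<b_{i+1}$), such that $a_i\geq b_i$ for all $i\geq 0$ (if $S$ is finite, this is required for all indices $i$ for which $a_i$ is defined, and $T$ has at least as many elements). Then for all $n\geq 1$, $$r_S(n)\leq r_T(n).$$
   Context: A partition is a finite nonincreasing sequence of positive integers (its parts); its size is not fixed. The perimeter of a partition with largest part $\alpha$ and $\lambda$ parts is $\alpha+\lambda-1$. For a set $X$ of positive integers, $r_X(n)$ denotes the number of partitions of perimeter $n$ all of whose parts lie in $X$. *)

theory Defs
  imports Main "HOL-Library.Infinite_Set"
begin

definition is_partition :: "nat list \<Rightarrow> bool" where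
  "is_partition p \<longleftrightarrow> p \<noteq> [] \<and> sorted_wrt (\<ge>) p \<and> (\<forall>x\<in>set p. 0 < x)"

definition perimeter :: "nat list \<Rightarrow> nat" where
  "perimeter p = hd p + length p - 1"

definition r :: "nat set \<Rightarrow> nat \<Rightarrow> nat" where
  "r X n = card {p. is_partition p \<and> set p \<subseteq> X \<and> perimeter p = n}"

definition has_elem :: "nat set \<Rightarrow> nat \<Rightarrow> bool" where
  "has_elem X i \<longleftrightarrow> infinite X \<or> i < card X"

definition elem :: "nat set \<Rightarrow> nat \<Rightarrow> nat" where
  "elem X i = (if finite X then sorted_list_of_set X ! i else enumerate X i)"

end

theory Submission
  imports Defs
begin

text \<open>Writing \<open>x = a\<^sub>i\<close> for \<open>x \<in> S\<close>, the map \<open>g a\<^sub>i = b\<^sub>i\<close> sends \<open>S\<close> into \<open>T\<close>, is strictly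
  increasing and satisfies \<open>g x \<le> x\<close>. Applying \<open>g\<close> to every part of a partition with parts
  in \<open>S\<close> gives a partition with parts in \<open>T\<close> whose largest part has shrunk by
  \<open>d = a - g a\<close>; appending \<open>d\<close> copies of the (new) smallest part restores the perimeter.
  Since \<open>g\<close> is injective and the length of the original partition is recovered from the
  perimeter and the largest part, this is an injection between the sets counted by
  \<open>r S n\<close> and \<open>r T n\<close>.\<close>

lemma elem_in: "has_elem X i \<Longrightarrow> elem X i \<in> X"
proof (cases "finite X")
  case True
  moreover assume "has_elem X i"
  ultimately have "i < length (sorted_list_of_set X)"
    by (simp add: has_elem_def)
  then have "sorted_list_of_set X ! i \<in> set (sorted_list_of_set X)"
    by (rule nth_mem)
  with True show ?thesis
    by (simp add: elem_def)
qed (simp add: elem_def enumerate_in_set)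

lemma elem_image: "elem X ` {i. has_elem X i} = X"
proof (cases "finite X")
  case True
  then have "elem X ` {i. has_elem X i} = set (sorted_list_of_set X)"
    unfolding set_conv_nth by (auto simp: has_elem_def elem_def)
  with True show ?thesis
    by simp
next
  case False
  then show ?thesis
    using enumerate_Ex[OF False] by (auto simp: has_elem_def elem_def enumerate_in_set)
qed

lemma elem_strict_mono_on: "strict_mono_on {i. has_elem X i} (elem X)"
proof (rule strict_mono_onI)
  fix i j assume "j \<in> {i. has_elem X i}" "i < j"
  then show "elem X i < elem X j"
    by (cases "finite X") (auto simp: has_elem_def elem_def sorted_wrt_nth_less enumerate_mono)
qed

lemma exists_shrinking_map:
  assumes "\<forall>i. has_elem S i \<longrightarrow> has_elem T i \<and> elem T i \<le> elem S i"
  obtains g where "strict_mono_on S g" and "\<And>x. x \<in> S \<Longrightarrow> g x \<in> T \<and> g x \<le> x"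
proof
  let ?I = "{i. has_elem S i}"
  define idx where "idx = the_inv_into ?I (elem S)"
  have inj: "inj_on (elem S) ?I"
    by (rule strict_mono_on_imp_inj_on[OF elem_strict_mono_on])
  have idx: "has_elem S (idx x)" "elem S (idx x) = x" if "x \<in> S" for x
    using that elem_image[of S] the_inv_into_into[OF inj] f_the_inv_into_f[OF inj]
    unfolding idx_def by auto
  show "strict_mono_on S (elem T \<circ> idx)"
  proof (rule strict_mono_onI)
    fix x y assume "x \<in> S" "y \<in> S" "x < y"
    then have "idx x < idx y"
      using idx strict_mono_on_leD[OF elem_strict_mono_on[of S], of "idx y" "idx x"]
      by (metis mem_Collect_eq not_le_imp_less leD)
    moreover have "has_elem T (idx x)" "has_elem T (idx y)"
      using idx \<open>x \<in> S\<close> \<open>y \<in> S\<close> assms by blast+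
    ultimately show "(elem T \<circ> idx) x < (elem T \<circ> idx) y"
      using strict_mono_onD[OF elem_strict_mono_on[of T], of "idx x" "idx y"] by simp
  qed
  show "(elem T \<circ> idx) x \<in> T \<and> (elem T \<circ> idx) x \<le> x" if "x \<in> S" for x
    using idx[OF that] assms elem_in by (metis comp_apply)
qed

definition shrink_parts :: "(nat \<Rightarrow> nat) \<Rightarrow> nat list \<Rightarrow> nat list" where
  "shrink_parts g p = map g p @ replicate (hd p - g (hd p)) (g (last p))"

lemma hd_shrink_parts: "p \<noteq> [] \<Longrightarrow> hd (shrink_parts g p) = g (hd p)"
  by (cases p) (auto simp: shrink_parts_def)

lemma take_shrink_parts: "take (length p) (shrink_parts g p) = map g p"
  by (simp add: shrink_parts_def)

lemma set_shrink_parts: "p \<noteq> [] \<Longrightarrow> set (shrink_parts g p) \<subseteq> g ` set p"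
  by (auto simp: shrink_parts_def)

lemma perimeter_shrink_parts:
  "p \<noteq> [] \<Longrightarrow> g (hd p) \<le> hd p \<Longrightarrow> perimeter (shrink_parts g p) = perimeter p"
  by (simp add: perimeter_def hd_shrink_parts) (simp add: shrink_parts_def)

lemma sorted_wrt_ge_last: "sorted_wrt (\<ge>) p \<Longrightarrow> x \<in> set p \<Longrightarrow> last p \<le> (x::nat)"
  by (induction p) (auto simp: last_in_set)

lemma is_partition_shrink_parts:
  assumes "is_partition p" "set p \<subseteq> X" "strict_mono_on X g" "\<And>x. x \<in> X \<Longrightarrow> 0 < g x"
  shows "is_partition (shrink_parts g p)"
proof -
  have p: "p \<noteq> []" "sorted_wrt (\<ge>) p"
    using assms(1) by (auto simp: is_partition_def)
  have mono: "g y \<le> g x" if "x \<in> set p" "y \<in> set p" "y \<le> x" for x y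
    using strict_mono_on_leD[OF assms(3)] that assms(2) by auto
  have "sorted_wrt (\<ge>) (map g p)"
    using p(2) mono by (auto simp: sorted_wrt_map elim: sorted_wrt_mono_rel[rotated])
  moreover have "g (last p) \<le> g x" if "x \<in> set p" for x
    using mono that p sorted_wrt_ge_last last_in_set by blast
  moreover have "sorted_wrt (\<ge>) (replicate k (c::nat))" for k c
    by (induction k) auto
  ultimately have "sorted_wrt (\<ge>) (shrink_parts g p)"
    by (auto simp: shrink_parts_def sorted_wrt_append)
  moreover have "\<forall>y\<in>set (shrink_parts g p). 0 < y"
    using set_shrink_parts[OF p(1)] assms(2,4) by blast
  ultimately show ?thesis
    using p(1) by (simp add: is_partition_def shrink_parts_def)
qed

lemma inj_on_shrink_parts:
  assumes "strict_mono_on X g"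
  shows "inj_on (shrink_parts g) {p. is_partition p \<and> set p \<subseteq> X \<and> perimeter p = n}"
proof (rule inj_onI)
  fix p q
  assume "p \<in> {p. is_partition p \<and> set p \<subseteq> X \<and> perimeter p = n}"
    and "q \<in> {p. is_partition p \<and> set p \<subseteq> X \<and> perimeter p = n}"
    and eq: "shrink_parts g p = shrink_parts g q"
  then have p: "p \<noteq> []" "set p \<subseteq> X" "perimeter p = n"
    and q: "q \<noteq> []" "set q \<subseteq> X" "perimeter q = n"
    by (auto simp: is_partition_def)
  have inj: "inj_on g X"
    by (rule strict_mono_on_imp_inj_on[OF assms])
  have "g (hd p) = g (hd q)"
    using eq p(1) q(1) by (metis hd_shrink_parts)
  then have "hd p = hd q"
    using inj p q by (meson hd_in_set inj_onD subsetD)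
  then have "length p = length q"
    using p q by (cases p; cases q) (auto simp: perimeter_def)
  then have "map g p = map g q"
    using eq by (metis take_shrink_parts)
  then show "p = q"
    using inj_on_subset[OF inj, of "set p \<union> set q"] p(2) q(2) inj_on_map_eq_map by blast
qed

lemma finite_partitions_perimeter:
  "finite {p. is_partition p \<and> set p \<subseteq> X \<and> perimeter p = n}"
proof (rule finite_subset)
  show "{p. is_partition p \<and> set p \<subseteq> X \<and> perimeter p = n}
      \<subseteq> {xs. set xs \<subseteq> {..n} \<and> length xs \<le> n + 1}"
  proof
    fix p assume "p \<in> {p. is_partition p \<and> set p \<subseteq> X \<and> perimeter p = n}"
    then obtain a p' where "p = a # p'" "sorted_wrt (\<ge>) p" "a + length p' = n"
      by (cases p) (auto simp: is_partition_def perimeter_def)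
    then show "p \<in> {xs. set xs \<subseteq> {..n} \<and> length xs \<le> n + 1}"
      by auto
  qed
  show "finite {xs. set xs \<subseteq> {..n} \<and> length xs \<le> n + 1}"
    by (rule finite_lists_length_le) simp
qed

lemma r_le_r_if_shrinking_map:
  assumes "strict_mono_on X g" "\<And>x. x \<in> X \<Longrightarrow> g x \<in> Y \<and> g x \<le> x" "0 \<notin> Y"
  shows "r X n \<le> r Y n"
  unfolding r_def
proof (rule card_inj_on_le[OF inj_on_shrink_parts[OF assms(1)] _ finite_partitions_perimeter])
  have pos: "0 < g x" if "x \<in> X" for x
    using assms(2,3) that by (metis gr0I)
  show "shrink_parts g ` {p. is_partition p \<and> set p \<subseteq> X \<and> perimeter p = n}
      \<subseteq> {p. is_partition p \<and> set p \<subseteq> Y \<and> perimeter p = n}"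
  proof (rule image_subsetI)
    fix p assume "p \<in> {p. is_partition p \<and> set p \<subseteq> X \<and> perimeter p = n}"
    then have p: "is_partition p" "set p \<subseteq> X" "perimeter p = n"
      by auto
    then have "p \<noteq> []" "hd p \<in> X"
      by (auto simp: is_partition_def)
    then have "perimeter (shrink_parts g p) = n"
      using perimeter_shrink_parts assms(2) p(3) by metis
    moreover have "set (shrink_parts g p) \<subseteq> Y"
      using set_shrink_parts[OF \<open>p \<noteq> []\<close>] p(2) assms(2) by blast
    ultimately show "shrink_parts g p \<in> {p. is_partition p \<and> set p \<subseteq> Y \<and> perimeter p = n}"
      using is_partition_shrink_parts[OF p(1,2) assms(1) pos] by blast
  qed
qed

theorem theorem1p3:
  fixes S T :: "nat set" and n :: nat
  assumes "0 \<notin> S" and "0 \<notin> T"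
    and "\<forall>i. has_elem S i \<longrightarrow> has_elem T i \<and> elem T i \<le> elem S i"
    and "n \<ge> 1"
  shows "r S n \<le> r T n"
proof -
  obtain g where "strict_mono_on S g" "\<And>x. x \<in> S \<Longrightarrow> g x \<in> T \<and> g x \<le> x"
    using exists_shrinking_map[OF assms(3)] by blast
  then show ?thesis
    using r_le_r_if_shrinking_map assms(2) by blast
qed

end
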